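(* Let $\mathbf p$ be an arbitrary pure strategy profile, with associated numbers $(u_i,v_i)_{i\in[m]}$. Let $i^*\in\arg\min_{i\in[m]}\{u_i+v_i\bar q\}$, and for $i\neq j$ let $x_{ij}\in\{0,1\}$ equal $1$ if and only if at least one user selects IP $(s_i,s_j,d)$. Then $\mathbf p$ is a Nash equilibrium if and only if both of the following hold: (i) for all $i\in[m]$ with $u_i>0$: $\bar q(u_i+v_i\bar q)\le u_{i^*}+v_{i^*}\bar q+\bar q+\frac{q\mu}{\phi}$; (ii) for all $i,l\in[m]$ with $x_{il}=1$: $u_l+v_l\bar q\le \min\left\{\bar q(u_i+1+v_i\bar q)-\frac{q\mu}{\phi},\ u_{i^*}+v_{i^*}\bar q+\bar q\right\}$.
   Context: Network model: there are $m\ge 2$ source nodes $s_1,\dots,s_m$ and one destination $d$. Source $s_i$ has a set $N_i$ of $n_i$ users. Each user generates an independent Poisson flow of packets of rate $\phi>0$; each direct link $(s_i,d)$ has service rate $\mu>0$; each sidelink $(s_i,s_j)$ loses packets independently with probability $q\in[0,1]$, and $\bar q=1-q$. Only pure strategies are considered: a user in $N_i$ chooses either the direct path (DP) $(s_i,d)$ or an indirect path (IP) $(s_i,s_j,d)$ for some $j\neq i$. For a pure profile $\mathbf p$, $u_i$ is the number of users of $N_i$ choosing DP and $v_i$ is the number of users of other sources choosing an IP $(s_j,s_i,d)$, $j\neq i$; $T_i=u_i\phi+v_i\bar q\phi$. The loss rate of a user $k\in N_i$ is $LR_k=\phi\frac{T_i}{T_i+\mu}$ if it uses DP, and $LR_k=\phi\left(q+\bar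 q\frac{T_j}{T_j+\mu}\right)$ if it uses IP $(s_i,s_j,d)$ (here $T_i,T_j$ include the user's own traffic). A Nash equilibrium is a pure profile in which no user can strictly decrease its loss rate by unilaterally switching to another route, all other users' routes being fixed. *)

theory Defs
  imports Complex_Main
begin

text \<open>Sources are indexed by 0..<m. Users of source i are indexed by k < n i.
A pure profile p assigns to user k of source i a relay index p i k < m:
p i k = i means the direct path (s_i,d); p i k = j with j \<noteq> i means the
indirect path (s_i,s_j,d).\<close>

definition valid_profile :: "nat \<Rightarrow> (nat \<Rightarrow> nat) \<Rightarrow> (nat \<Rightarrow> nat \<Rightarrow> nat) \<Rightarrow> bool" where
  "valid_profile m n p \<longleftrightarrow> (\<forall>i<m. \<forall>k<n i. p i k < m)"

definition u_num :: "(nat \<Rightarrow> nat) \<Rightarrow> (nat \<Rightarrow> nat \<Rightarrow> nat) \<Rightarrow> nat \<Rightarrow> nat" where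
  "u_num n p i = card {k. k < n i \<and> p i k = i}"

definition v_num :: "nat \<Rightarrow> (nat \<Rightarrow> nat) \<Rightarrow> (nat \<Rightarrow> nat \<Rightarrow> nat) \<Rightarrow> nat \<Rightarrow> nat" where
  "v_num m n p i = card {(j, k). j < m \<and> j \<noteq> i \<and> k < n j \<and> p j k = i}"

definition traffic :: "nat \<Rightarrow> (nat \<Rightarrow> nat) \<Rightarrow> real \<Rightarrow> real \<Rightarrow> (nat \<Rightarrow> nat \<Rightarrow> nat) \<Rightarrow> nat \<Rightarrow> real" where
  "traffic m n \<phi> q p i = real (u_num n p i) * \<phi> + real (v_num m n p i) * (1 - q) * \<phi>"

definition loss_rate :: "nat \<Rightarrow> (nat \<Rightarrow> nat) \<Rightarrow> real \<Rightarrow> real \<Rightarrow> real \<Rightarrow> (nat \<Rightarrow> nat \<Rightarrow> nat) \<Rightarrow> nat \<Rightarrow> nat \<Rightarrow> real" where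
  "loss_rate m n \<phi> \<mu> q p i k =
     (let j = p i k; T = traffic m n \<phi> q p j in
      if j = i then \<phi> * (T / (T + \<mu>))
      else \<phi> * (q + (1 - q) * (T / (T + \<mu>))))"

definition deviate :: "(nat \<Rightarrow> nat \<Rightarrow> nat) \<Rightarrow> nat \<Rightarrow> nat \<Rightarrow> nat \<Rightarrow> (nat \<Rightarrow> nat \<Rightarrow> nat)" where
  "deviate p i k r = p(i := (p i)(k := r))"

definition nash_eq :: "nat \<Rightarrow> (nat \<Rightarrow> nat) \<Rightarrow> real \<Rightarrow> real \<Rightarrow> real \<Rightarrow> (nat \<Rightarrow> nat \<Rightarrow> nat) \<Rightarrow> bool" where
  "nash_eq m n \<phi> \<mu> q p \<longleftrightarrow>
     (\<forall>i<m. \<forall>k<n i. \<forall>r<m.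
        loss_rate m n \<phi> \<mu> q p i k \<le> loss_rate m n \<phi> \<mu> q (deviate p i k r) i k)"

definition uses_ip :: "(nat \<Rightarrow> nat) \<Rightarrow> (nat \<Rightarrow> nat \<Rightarrow> nat) \<Rightarrow> nat \<Rightarrow> nat \<Rightarrow> bool" where
  "uses_ip n p i l \<longleftrightarrow> i \<noteq> l \<and> (\<exists>k<n i. p i k = l)"

end

(*
  Measured in units of the flow rate \<phi>, a route whose sidelink loses a fraction a of the
  packets and whose bottleneck queue carries load s loses a fraction (s + a \<nu>) / (s + \<nu>),
  where \<nu> = \<mu> / \<phi>. Comparing two such fractions is a linear condition on the loads, and a
  deviating user adds its own thinned traffic 1 - a to its new relay. Hence every unilateral
  deviation is governed by a linear inequality between loads. For a direct-path user the
  weakest alternative is the indirect path through the least loaded source istar; for a user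
  relaying through s_l, moving back to its direct path gives the first bound of (ii), and moving
  to another relay cancels the factor 1 - q and is again weakest at istar. If q = 1 the first
  bound is unsatisfiable, and when istar = i it already implies the second one.
*)
theory Submission
  imports Defs
begin

definition load :: "nat \<Rightarrow> (nat \<Rightarrow> nat) \<Rightarrow> real \<Rightarrow> (nat \<Rightarrow> nat \<Rightarrow> nat) \<Rightarrow> nat \<Rightarrow> real" where
  "load m n q p j = real (u_num n p j) + real (v_num m n p j) * (1 - q)"

definition hop_loss :: "real \<Rightarrow> nat \<Rightarrow> nat \<Rightarrow> real" where
  "hop_loss q i j = (if j = i then 0 else q)"

definition drop_prob :: "real \<Rightarrow> real \<Rightarrow> real \<Rightarrow> real" where
  "drop_prob \<nu> a s = a + (1 - a) * (s / (s + \<nu>))"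

definition best_response ::
    "nat \<Rightarrow> (nat \<Rightarrow> nat) \<Rightarrow> real \<Rightarrow> real \<Rightarrow> real \<Rightarrow> (nat \<Rightarrow> nat \<Rightarrow> nat) \<Rightarrow> nat \<Rightarrow> nat \<Rightarrow> bool" where
  "best_response m n \<phi> \<mu> q p i k \<longleftrightarrow>
     (\<forall>r<m. loss_rate m n \<phi> \<mu> q p i k \<le> loss_rate m n \<phi> \<mu> q (deviate p i k r) i k)"

lemma nash_eq_iff_best_responses:
  "nash_eq m n \<phi> \<mu> q p \<longleftrightarrow> (\<forall>i<m. \<forall>k<n i. best_response m n \<phi> \<mu> q p i k)"
  by (simp add: nash_eq_def best_response_def)

lemma drop_prob_le_iff:
  fixes \<nu> a b s t :: real
  assumes "\<nu> > 0" "s \<ge> 0" "t \<ge> 0"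
  shows "drop_prob \<nu> a s \<le> drop_prob \<nu> b t \<longleftrightarrow> (1 - b) * s + a * \<nu> \<le> (1 - a) * t + b * \<nu>"
proof -
  have s\<nu>: "s + \<nu> > 0" and t\<nu>: "t + \<nu> > 0" using assms by auto
  have cross_diff: "(t + b * \<nu>) * (s + \<nu>) - (s + a * \<nu>) * (t + \<nu>)
      = \<nu> * (((1 - a) * t + b * \<nu>) - ((1 - b) * s + a * \<nu>))"
    by (simp add: algebra_simps)
  have "drop_prob \<nu> a s \<le> drop_prob \<nu> b t \<longleftrightarrow> (s + a * \<nu>) / (s + \<nu>) \<le> (t + b * \<nu>) / (t + \<nu>)"
    using s\<nu> t\<nu> by (simp add: drop_prob_def field_simps)
  also have "\<dots> \<longleftrightarrow> (s + a * \<nu>) * (t + \<nu>) \<le> (t + b * \<nu>) * (s + \<nu>)"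
    using s\<nu> t\<nu> by (simp add: divide_le_eq le_divide_eq mult.commute)
  also have "\<dots> \<longleftrightarrow> 0 \<le> \<nu> * (((1 - a) * t + b * \<nu>) - ((1 - b) * s + a * \<nu>))"
    unfolding cross_diff[symmetric] by linarith
  also have "\<dots> \<longleftrightarrow> (1 - b) * s + a * \<nu> \<le> (1 - a) * t + b * \<nu>"
    using assms(1) by (simp add: zero_le_mult_iff)
  finally show ?thesis .
qed

lemma u_num_deviate:
  assumes "k < n i" "p i k \<noteq> r"
  shows "u_num n (deviate p i k r) r = u_num n p r + (if r = i then 1 else 0)"
proof (cases "r = i")
  case True
  have "{k'. k' < n r \<and> deviate p i k r r k' = r} = insert k {k'. k' < n r \<and> p r k' = r}"
    using True assms by (auto simp: deviate_def)
  moreover have "k \<notin> {k'. k' < n r \<and> p r k' = r}"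
    using True assms by auto
  ultimately show ?thesis
    using True by (simp add: u_num_def)
next
  case False
  then show ?thesis by (simp add: u_num_def deviate_def)
qed

lemma v_num_deviate:
  assumes "i < m" "k < n i" "p i k \<noteq> r"
  shows "v_num m n (deviate p i k r) r = v_num m n p r + (if r = i then 0 else 1)"
proof (cases "r = i")
  case True
  have "{(j, k'). j < m \<and> j \<noteq> r \<and> k' < n j \<and> deviate p i k r j k' = r}
      = {(j, k'). j < m \<and> j \<noteq> r \<and> k' < n j \<and> p j k' = r}"
    using True by (auto simp: deviate_def)
  then show ?thesis
    using True by (simp add: v_num_def)
next
  case False
  let ?V = "{(j, k'). j < m \<and> j \<noteq> r \<and> k' < n j \<and> p j k' = r}"
  have "finite ?V"
    by (rule finite_subset[of _ "SIGMA j:{..<m}. {..<n j}"]) auto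
  moreover have "{(j, k'). j < m \<and> j \<noteq> r \<and> k' < n j \<and> deviate p i k r j k' = r} = insert (i, k) ?V"
    using False assms by (auto simp: deviate_def split: if_splits)
  moreover have "(i, k) \<notin> ?V"
    using assms by auto
  ultimately show ?thesis
    using False by (simp add: v_num_def)
qed

lemma load_deviate:
  assumes "i < m" "k < n i" "p i k \<noteq> r"
  shows "load m n q (deviate p i k r) r = load m n q p r + (1 - hop_loss q i r)"
  using assms by (simp add: load_def hop_loss_def u_num_deviate v_num_deviate algebra_simps)

lemma u_num_pos_iff: "0 < u_num n p i \<longleftrightarrow> (\<exists>k<n i. p i k = i)"
proof -
  have "finite {k. k < n i \<and> p i k = i}" by simp
  then show ?thesis by (auto simp: u_num_def card_gt_0_iff)
qed

lemma load_nonneg: "q \<le> 1 \<Longrightarrow> load m n q p j \<ge> 0"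
  by (simp add: load_def)

context
  fixes m :: nat and n :: "nat \<Rightarrow> nat" and \<phi> \<mu> q :: real
  assumes \<phi>_pos: "\<phi> > 0" and \<mu>_pos: "\<mu> > 0" and q_nonneg: "0 \<le> q" and q_le_1: "q \<le> 1"
begin

lemma loss_rate_eq_drop_prob:
  "loss_rate m n \<phi> \<mu> q p i k
     = \<phi> * drop_prob (\<mu> / \<phi>) (hop_loss q i (p i k)) (load m n q p (p i k))"
proof -
  have "traffic m n \<phi> q p j = \<phi> * load m n q p j" for j
    by (simp add: traffic_def load_def algebra_simps)
  moreover have "\<phi> * L / (\<phi> * L + \<mu>) = L / (L + \<mu> / \<phi>)" for L
    using \<phi>_pos by (simp add: field_simps)
  ultimately show ?thesis
    by (simp add: loss_rate_def drop_prob_def hop_loss_def Let_def)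
qed

lemma deviation_unprofitable_iff:
  assumes "i < m" "k < n i" "r \<noteq> p i k"
  defines "a \<equiv> hop_loss q i (p i k)" and "b \<equiv> hop_loss q i r"
  shows "loss_rate m n \<phi> \<mu> q p i k \<le> loss_rate m n \<phi> \<mu> q (deviate p i k r) i k
    \<longleftrightarrow> (1 - b) * load m n q p (p i k) + a * (\<mu> / \<phi>)
        \<le> (1 - a) * (load m n q p r + (1 - b)) + b * (\<mu> / \<phi>)"
proof -
  have "deviate p i k r i k = r" by (simp add: deviate_def)
  moreover have "b \<le> 1" using q_le_1 by (simp add: b_def hop_loss_def)
  ultimately show ?thesis
    using assms \<phi>_pos \<mu>_pos q_le_1
    by (simp add: loss_rate_eq_drop_prob load_deviate drop_prob_le_iff load_nonneg)
qed

lemma best_response_iff_unprofitable: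
  "best_response m n \<phi> \<mu> q p i k \<longleftrightarrow>
     (\<forall>r<m. r \<noteq> p i k \<longrightarrow> loss_rate m n \<phi> \<mu> q p i k \<le> loss_rate m n \<phi> \<mu> q (deviate p i k r) i k)"
  unfolding best_response_def by (metis deviate_def fun_upd_triv order_refl)

lemma best_response_direct_iff:
  assumes "i < m" "k < n i" "p i k = i" "istar < m"
    and istar_min: "\<forall>r<m. load m n q p istar \<le> load m n q p r"
  shows "best_response m n \<phi> \<mu> q p i k \<longleftrightarrow>
    (1 - q) * load m n q p i \<le> load m n q p istar + (1 - q) + q * \<mu> / \<phi>"
proof -
  let ?L = "load m n q p"
  have "best_response m n \<phi> \<mu> q p i k \<longleftrightarrow>
      (\<forall>r<m. r \<noteq> i \<longrightarrow> (1 - q) * ?L i \<le> ?L r + (1 - q) + q * \<mu> / \<phi>)"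
    using assms(1-3)
    by (simp add: best_response_iff_unprofitable deviation_unprofitable_iff hop_loss_def)
  also have "\<dots> \<longleftrightarrow> (1 - q) * ?L i \<le> ?L istar + (1 - q) + q * \<mu> / \<phi>"
  proof
    assume deviations: "\<forall>r<m. r \<noteq> i \<longrightarrow> (1 - q) * ?L i \<le> ?L r + (1 - q) + q * \<mu> / \<phi>"
    show "(1 - q) * ?L i \<le> ?L istar + (1 - q) + q * \<mu> / \<phi>"
    proof (cases "istar = i")
      case True
      have "0 \<le> q * ?L i" "0 \<le> q * \<mu> / \<phi>"
        using q_nonneg q_le_1 \<phi>_pos \<mu>_pos by (simp_all add: load_nonneg)
      then show ?thesis
        using True q_le_1 by (simp add: algebra_simps)
    next
      case False
      then show ?thesis using deviations \<open>istar < m\<close> by blast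
    qed
  next
    assume "(1 - q) * ?L i \<le> ?L istar + (1 - q) + q * \<mu> / \<phi>"
    then show "\<forall>r<m. r \<noteq> i \<longrightarrow> (1 - q) * ?L i \<le> ?L r + (1 - q) + q * \<mu> / \<phi>"
      using istar_min by force
  qed
  finally show ?thesis .
qed

lemma best_response_indirect_iff:
  assumes "i < m" "k < n i" "p i k = l" "l \<noteq> i" "istar < m"
    and istar_min: "\<forall>r<m. load m n q p istar \<le> load m n q p r"
  shows "best_response m n \<phi> \<mu> q p i k \<longleftrightarrow>
    load m n q p l \<le> min ((1 - q) * (load m n q p i + 1) - q * \<mu> / \<phi>) (load m n q p istar + (1 - q))"
proof -
  let ?L = "load m n q p"
  let ?back_to_direct = "?L l \<le> (1 - q) * (?L i + 1) - q * \<mu> / \<phi>"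
  have "best_response m n \<phi> \<mu> q p i k \<longleftrightarrow>
      ?back_to_direct \<and> (\<forall>r<m. r \<noteq> i \<longrightarrow> r \<noteq> l \<longrightarrow> (1 - q) * ?L l \<le> (1 - q) * (?L r + (1 - q)))"
    using assms(1-4)
    by (auto simp add: best_response_iff_unprofitable deviation_unprofitable_iff hop_loss_def
        algebra_simps)
  also have "\<dots> \<longleftrightarrow> ?back_to_direct \<and> ?L l \<le> ?L istar + (1 - q)"
  proof (cases "q = 1")
    case True
    have "0 \<le> ?L l" "0 < \<mu> / \<phi>"
      using q_le_1 \<phi>_pos \<mu>_pos by (simp_all add: load_nonneg)
    then show ?thesis by (simp add: True)
  next
    case False
    then have "q < 1" using q_le_1 by simp
    then have cancel: "(1 - q) * ?L l \<le> (1 - q) * (?L r + (1 - q)) \<longleftrightarrow> ?L l \<le> ?L r + (1 - q)" for r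
      by simp
    have istar_i: "?L l \<le> ?L istar + (1 - q)" if ?back_to_direct "istar = i"
    proof -
      have "0 \<le> q * ?L i" "0 \<le> q * \<mu> / \<phi>"
        using q_nonneg q_le_1 \<phi>_pos \<mu>_pos by (simp_all add: load_nonneg)
      then show ?thesis using that by (simp add: algebra_simps)
    qed
    show ?thesis
    proof (rule conj_cong[OF refl])
      assume back_to_direct: ?back_to_direct
      show "(\<forall>r<m. r \<noteq> i \<longrightarrow> r \<noteq> l \<longrightarrow> (1 - q) * ?L l \<le> (1 - q) * (?L r + (1 - q)))
          \<longleftrightarrow> ?L l \<le> ?L istar + (1 - q)"
        unfolding cancel
      proof
        assume "\<forall>r<m. r \<noteq> i \<longrightarrow> r \<noteq> l \<longrightarrow> ?L l \<le> ?L r + (1 - q)"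
        then show "?L l \<le> ?L istar + (1 - q)"
          using \<open>istar < m\<close> back_to_direct istar_i q_le_1 by (cases "istar = i \<or> istar = l") auto
      next
        assume "?L l \<le> ?L istar + (1 - q)"
        then show "\<forall>r<m. r \<noteq> i \<longrightarrow> r \<noteq> l \<longrightarrow> ?L l \<le> ?L r + (1 - q)"
          using istar_min by force
      qed
    qed
  qed
  finally show ?thesis by simp
qed

end

theorem theorem2:
  fixes m :: nat and n :: "nat \<Rightarrow> nat" and p :: "nat \<Rightarrow> nat \<Rightarrow> nat"
    and \<phi> \<mu> q :: real and istar :: nat
  assumes "m \<ge> 2" and "\<phi> > 0" and "\<mu> > 0" and "0 \<le> q" and "q \<le> 1"
    and "valid_profile m n p"
    and "istar < m"
    and "\<forall>i<m. real (u_num n p istar) + real (v_num m n p istar) * (1 - q)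
                \<le> real (u_num n p i) + real (v_num m n p i) * (1 - q)"
  shows "nash_eq m n \<phi> \<mu> q p \<longleftrightarrow>
    ((\<forall>i<m. u_num n p i > 0 \<longrightarrow>
        (1 - q) * (real (u_num n p i) + real (v_num m n p i) * (1 - q))
          \<le> real (u_num n p istar) + real (v_num m n p istar) * (1 - q) + (1 - q) + q * \<mu> / \<phi>)
     \<and> (\<forall>i<m. \<forall>l<m. uses_ip n p i l \<longrightarrow>
        real (u_num n p l) + real (v_num m n p l) * (1 - q)
          \<le> min ((1 - q) * (real (u_num n p i) + 1 + real (v_num m n p i) * (1 - q)) - q * \<mu> / \<phi>)
                 (real (u_num n p istar) + real (v_num m n p istar) * (1 - q) + (1 - q))))"
proof -
  let ?L = "load m n q p"
  have load_eqs: "real (u_num n p j) + real (v_num m n p j) * (1 - q) = ?L j"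
    "real (u_num n p j) + 1 + real (v_num m n p j) * (1 - q) = ?L j + 1" for j
    by (simp_all add: load_def)
  have istar_min: "\<forall>r<m. ?L istar \<le> ?L r"
    using assms(8) by (simp add: load_eqs)
  have user_iff: "best_response m n \<phi> \<mu> q p i k \<longleftrightarrow>
      (if p i k = i then (1 - q) * ?L i \<le> ?L istar + (1 - q) + q * \<mu> / \<phi>
       else ?L (p i k) \<le> min ((1 - q) * (?L i + 1) - q * \<mu> / \<phi>) (?L istar + (1 - q)))"
    if "i < m" "k < n i" for i k
    using best_response_direct_iff[OF assms(2-5) that _ assms(7) istar_min]
      best_response_indirect_iff[OF assms(2-5) that refl _ assms(7) istar_min]
    by simp
  have relay_valid: "p i k < m" if "i < m" "k < n i" for i k
    using assms(6) that by (simp add: valid_profile_def)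
  show ?thesis
    unfolding nash_eq_iff_best_responses load_eqs u_num_pos_iff uses_ip_def
    using relay_valid by (fastforce simp: user_iff)
qed

end
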